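(* Let $X\in\mathbb{R}^{n\times r}$ have linearly independent columns and let $A\in\mathbb{R}^{r\times r}$ be skewsymmetric. Then $\det(A+X^\top X)>0$. Moreover, the function on subsets $\mathtt{C}\subseteq\{1,\dots,n\}$ given by $$p(\mathtt{C})=\frac{1}{\det(A+X^\top X)}\det\begin{bmatrix}0_{|\mathtt{C}|}&X_{\mathtt{C}:}\\-(X_{\mathtt{C}:})^\top&A\end{bmatrix}$$ is a probability mass function on the subsets of $\{1,\dots,n\}$. That is, $p(\mathtt{C})\ge0$ for all $\mathtt{C}$ and $\sum_{\mathtt{C}}p(\mathtt{C})=1$. For $\mathtt{C}=\emptyset$ the matrix is understood as $A$.
   Context: $X_{\mathtt{C}:}$ is the submatrix of $X$ with rows indexed by $\mathtt{C}$ in increasing order. $0_m$ is the $m\times m$ zero matrix. *)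

theory Defs
  imports "Jordan_Normal_Form.Determinant" "Jordan_Normal_Form.DL_Submatrix"
begin

definition rows_sub :: "real mat \<Rightarrow> nat set \<Rightarrow> real mat" where
  "rows_sub X C = submatrix X C {0..<dim_col X}"

definition block_C :: "real mat \<Rightarrow> real mat \<Rightarrow> nat set \<Rightarrow> real mat" where
  "block_C X A C = (let Y = rows_sub X C in
     four_block_mat (0\<^sub>m (dim_row Y) (dim_row Y)) Y (- transpose_mat Y) A)"

definition pC :: "real mat \<Rightarrow> real mat \<Rightarrow> nat set \<Rightarrow> real" where
  "pC X A C = det (block_C X A C) / det (A + transpose_mat X * X)"

end

theory Submission
  imports Defs "Jordan_Normal_Form.Char_Poly"
begin

(*
  Let M = [[0, X], [-X^T, A]], a skew-symmetric matrix of size n + r. Adding the identity on the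
  first n coordinates gives [[I, X], [-X^T, A]], whose determinant is that of the Schur complement
  A + X^T X. Expanding det (D + M) for the diagonal D = diag (1, ..., 1, 0, ..., 0) gives the sum,
  over B \<subseteq> {0..<n}, of the principal minors of M on the complement of B, i.e. on
  C \<union> {n..<n+r} with C = {0..<n} - B; these minors are exactly det (block_C X A C).

  Each such minor is the determinant of a real skew-symmetric matrix K, hence nonnegative:
  K + t I is invertible for t > 0 because v^T K v = 0, so the monic characteristic polynomial of -K
  has no positive root and keeps the sign of its value det K at 0. The same identity turns
  v^T (A + X^T X) v into |X v|^2, so det (A + X^T X) \<noteq> 0 and therefore it is positive.
*)

lemma skew_quadratic_form_zero:
  fixes K :: "'a :: linordered_idom mat"
  assumes K: "K \<in> carrier_mat m m" and skew: "transpose_mat K = - K" and v: "v \<in> carrier_vec m"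
  shows "v \<bullet> (K *\<^sub>v v) = 0"
proof -
  have "v \<bullet> (K *\<^sub>v v) = (transpose_mat K *\<^sub>v v) \<bullet> v"
    by (rule transpose_vec_mult_scalar[OF K v v, symmetric])
  also have "\<dots> = - ((K *\<^sub>v v) \<bullet> v)"
    using K v by (simp add: skew uminus_mult_mat_vec)
  also have "\<dots> = - (v \<bullet> (K *\<^sub>v v))"
    using K v by (simp add: comm_scalar_prod[of _ m])
  finally show ?thesis by simp
qed

lemma scalar_prod_self_pos:
  fixes v :: "'a :: linordered_idom vec"
  assumes v: "v \<in> carrier_vec m" and nz: "v \<noteq> 0\<^sub>v m"
  shows "v \<bullet> v > 0"
proof -
  obtain i where i: "i < m" "v $ i \<noteq> 0"
    using nz v by (metis eq_vecI carrier_vecD index_zero_vec)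
  have "0 < v $ i * v $ i" using i by (auto simp: zero_less_mult_iff linorder_neq_iff)
  also have "\<dots> \<le> (\<Sum>j<m. v $ j * v $ j)"
    by (rule member_le_sum) (use i in auto)
  also have "\<dots> = v \<bullet> v" using v by (simp add: scalar_prod_def lessThan_atLeast0)
  finally show ?thesis .
qed

lemma det_skew_add_pos_def_nonzero:
  fixes K G :: "'a :: linordered_idom mat"
  assumes K: "K \<in> carrier_mat m m" and skew: "transpose_mat K = - K" and G: "G \<in> carrier_mat m m"
    and pos_def: "\<And>v. v \<in> carrier_vec m \<Longrightarrow> v \<noteq> 0\<^sub>v m \<Longrightarrow> v \<bullet> (G *\<^sub>v v) > 0"
  shows "det (K + G) \<noteq> 0"
proof
  assume "det (K + G) = 0"
  then obtain v where v: "v \<in> carrier_vec m" "v \<noteq> 0\<^sub>v m" and ker: "(K + G) *\<^sub>v v = 0\<^sub>v m"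
    using det_0_iff_vec_prod_zero[of "K + G" m] K G by auto
  have "0 = v \<bullet> ((K + G) *\<^sub>v v)" using v ker by simp
  also have "\<dots> = v \<bullet> (K *\<^sub>v v) + v \<bullet> (G *\<^sub>v v)"
    using K G v by (simp add: add_mult_distrib_mat_vec scalar_prod_add_distrib[of _ m])
  also have "\<dots> = v \<bullet> (G *\<^sub>v v)" using skew_quadratic_form_zero[OF K skew v(1)] by simp
  finally show False using pos_def[OF v] by simp
qed

lemma char_poly_skew_no_pos_root:
  fixes K :: "real mat"
  assumes K: "K \<in> carrier_mat m m" and skew: "transpose_mat K = - K" and t: "t > 0"
  shows "poly (char_poly K) t \<noteq> 0"
proof -
  have "- char_matrix K t = - K + t \<cdot>\<^sub>m 1\<^sub>m m"
    unfolding char_matrix_def using K by (intro eq_matI) auto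
  then have "poly (char_poly K) t = det (- K + t \<cdot>\<^sub>m 1\<^sub>m m)"
    by (simp add: char_poly_matrix[OF K])
  also have "\<dots> \<noteq> 0"
  proof (rule det_skew_add_pos_def_nonzero)
    show "transpose_mat (- K) = - (- K)" using skew by (simp add: transpose_uminus)
    show "v \<bullet> (t \<cdot>\<^sub>m 1\<^sub>m m *\<^sub>v v) > 0" if "v \<in> carrier_vec m" "v \<noteq> 0\<^sub>v m" for v
    proof -
      have "t \<cdot>\<^sub>m 1\<^sub>m m *\<^sub>v v = t \<cdot>\<^sub>v v" using that(1) by auto
      then show ?thesis using scalar_prod_self_pos[OF that] t that(1) by simp
    qed
  qed (use K in auto)
  finally show ?thesis .
qed

lemma det_skew_nonneg:
  fixes K :: "real mat"
  assumes K: "K \<in> carrier_mat m m" and skew: "transpose_mat K = - K"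
  shows "det K \<ge> 0"
proof (rule ccontr)
  assume "\<not> det K \<ge> 0"
  let ?p = "char_poly (- K)"
  have K': "- K \<in> carrier_mat m m" and skew': "transpose_mat (- K) = - (- K)"
    using K skew by (auto simp: transpose_uminus)
  have "- char_matrix (- K) 0 = K"
    unfolding char_matrix_def using K by (intro eq_matI) auto
  then have "poly ?p 0 = det K" by (simp add: char_poly_matrix[OF K'])
  with \<open>\<not> det K \<ge> 0\<close> have at_0: "poly ?p 0 < 0" by simp
  have "lead_coeff ?p = 1" using degree_monic_char_poly[OF K'] by simp
  then obtain b where "\<forall>x\<ge>b. poly ?p x \<ge> 1" using poly_pinfty_gt_lc[of ?p] by auto
  then have "poly ?p (max b 1) \<ge> 1" by simp
  then have at_b: "poly ?p (max b 1) > 0" by linarith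
  obtain t where "0 < t" "poly ?p t = 0"
    using poly_IVT_pos[OF _ at_0 at_b] by force
  then show False using char_poly_skew_no_pos_root[OF K' skew'] by blast
qed

lemma det_four_block_mat_one_upper_left:
  fixes B C D :: "'a :: idom mat"
  assumes B: "B \<in> carrier_mat n m" and C: "C \<in> carrier_mat m n" and D: "D \<in> carrier_mat m m"
  shows "det (four_block_mat (1\<^sub>m n) B C D) = det (D - C * B)"
proof -
  let ?L = "four_block_mat (1\<^sub>m n) (0\<^sub>m n m) C (1\<^sub>m m)"
  let ?U = "four_block_mat (1\<^sub>m n) B (0\<^sub>m m n) (D - C * B)"
  have DCB: "D - C * B \<in> carrier_mat m m" using B C D by auto
  have "?L * ?U = four_block_mat (1\<^sub>m n * 1\<^sub>m n + 0\<^sub>m n m * 0\<^sub>m m n) (1\<^sub>m n * B + 0\<^sub>m n m * (D - C * B))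
      (C * 1\<^sub>m n + 1\<^sub>m m * 0\<^sub>m m n) (C * B + 1\<^sub>m m * (D - C * B))"
    by (rule mult_four_block_mat[OF one_carrier_mat zero_carrier_mat C one_carrier_mat
          one_carrier_mat B zero_carrier_mat DCB])
  also have "\<dots> = four_block_mat (1\<^sub>m n) B C D"
  proof (rule cong_four_block_mat)
    show "C * B + 1\<^sub>m m * (D - C * B) = D" using B C D by (intro eq_matI) auto
  qed (use B C in auto)
  finally have factor: "?L * ?U = four_block_mat (1\<^sub>m n) B C D" .
  have "det (four_block_mat (1\<^sub>m n) B C D) = det ?L * det ?U"
    unfolding factor[symmetric] using B C DCB by (intro det_mult[of _ "n + m"]) auto
  also have "det ?L = 1"
    using det_four_block_mat_upper_right_zero[OF one_carrier_mat refl C one_carrier_mat] by simp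
  also have "det ?U = det (D - C * B)"
    using det_four_block_mat_lower_left_zero[OF one_carrier_mat B refl DCB] by simp
  finally show ?thesis by simp
qed

definition principal_minor :: "'a :: comm_ring_1 mat \<Rightarrow> nat set \<Rightarrow> 'a" where
  "principal_minor M S = (\<Sum>p | p permutes S. signof p * (\<Prod>i\<in>S. M $$ (i, p i)))"

lemma sum_permutes_fixing:
  assumes "finite S" and "B \<subseteq> S"
  shows "(\<Sum>p | p permutes S. if \<forall>i\<in>B. p i = i then f p else 0) = (\<Sum>p | p permutes (S - B). f p)"
proof -
  have "{p. p permutes S \<and> (\<forall>i\<in>B. p i = i)} = {p. p permutes (S - B)}"
    using assms(2) unfolding permutes_def by blast
  then show ?thesis
    using sum.inter_filter[OF finite_permutations[OF assms(1)], of f "\<lambda>p. \<forall>i\<in>B. p i = i"] by simp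
qed

lemma prod_diagonal_add_expand:
  fixes d :: "nat \<Rightarrow> 'a :: comm_ring_1"
  assumes "finite S"
  shows "(\<Prod>i\<in>S. (if p i = i then d i else 0) + a i)
    = (\<Sum>B\<in>Pow S. (if \<forall>i\<in>B. p i = i then \<Prod>i\<in>B. d i else 0) * (\<Prod>i\<in>S - B. a i))"
proof -
  have fixed: "(\<Prod>i\<in>B. if p i = i then d i else 0) = (if \<forall>i\<in>B. p i = i then \<Prod>i\<in>B. d i else 0)"
    if "B \<in> Pow S" for B
  proof (cases "\<forall>i\<in>B. p i = i")
    case True
    then show ?thesis by (simp cong: prod.cong)
  next
    case False
    then obtain i where "i \<in> B" "p i \<noteq> i" by blast
    then have "(\<Prod>i\<in>B. if p i = i then d i else 0) = 0"
      using finite_subset[of B S] that assms by (intro prod_zero) auto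
    then show ?thesis by (simp only: if_not_P[OF False])
  qed
  show ?thesis
    unfolding prod_add[OF assms] by (intro sum.cong refl) (simp only: fixed)
qed

lemma det_add_diagonal:
  fixes M :: "'a :: comm_ring_1 mat"
  assumes M: "M \<in> carrier_mat N N"
  shows "det (mat N N (\<lambda>(i, j). if i = j then d i else 0) + M)
    = (\<Sum>B\<in>Pow {0..<N}. (\<Prod>i\<in>B. d i) * principal_minor M ({0..<N} - B))"
proof -
  let ?E = "mat N N (\<lambda>(i, j). if i = j then d i else 0) + M"
  let ?minor_term = "\<lambda>p B. signof p * (\<Prod>i\<in>{0..<N} - B. M $$ (i, p i))"
  let ?term = "\<lambda>p B. (if \<forall>i\<in>B. p i = i then (\<Prod>i\<in>B. d i) * ?minor_term p B else 0)"
  have "det ?E = (\<Sum>p | p permutes {0..<N}. signof p * (\<Prod>i\<in>{0..<N}. ?E $$ (i, p i)))"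
    by (rule det_def') (use M in simp)
  also have "\<dots> = (\<Sum>p | p permutes {0..<N}. \<Sum>B\<in>Pow {0..<N}. ?term p B)"
  proof (rule sum.cong[OF refl])
    fix p assume "p \<in> {p. p permutes {0..<N}}"
    then have p: "p permutes {0..<N}" by simp
    have "?E $$ (i, p i) = (if p i = i then d i else 0) + M $$ (i, p i)" if "i \<in> {0..<N}" for i
      using that M permutes_in_image[OF p] by (cases "p i = i") auto
    then have "(\<Prod>i\<in>{0..<N}. ?E $$ (i, p i))
        = (\<Prod>i\<in>{0..<N}. (if p i = i then d i else 0) + M $$ (i, p i))"
      by (rule prod.cong[OF refl])
    then show "signof p * (\<Prod>i\<in>{0..<N}. ?E $$ (i, p i)) = (\<Sum>B\<in>Pow {0..<N}. ?term p B)"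
      by (simp add: prod_diagonal_add_expand sum_distrib_left) (intro sum.cong refl; simp add: mult_ac)
  qed
  also have "\<dots> = (\<Sum>B\<in>Pow {0..<N}. \<Sum>p | p permutes {0..<N}. ?term p B)"
    by (rule sum.swap)
  also have "\<dots> = (\<Sum>B\<in>Pow {0..<N}. \<Sum>p | p permutes ({0..<N} - B). (\<Prod>i\<in>B. d i) * ?minor_term p B)"
    by (intro sum.cong refl sum_permutes_fixing) auto
  also have "\<dots> = (\<Sum>B\<in>Pow {0..<N}. (\<Prod>i\<in>B. d i) * principal_minor M ({0..<N} - B))"
    by (simp add: principal_minor_def sum_distrib_left)
  finally show ?thesis .
qed

lemma det_add_indicator_diagonal:
  fixes M :: "'a :: comm_ring_1 mat"
  assumes M: "M \<in> carrier_mat N N" and U: "U \<subseteq> {0..<N}"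
  shows "det (mat N N (\<lambda>(i, j). if i = j \<and> i \<in> U then 1 else 0) + M)
    = (\<Sum>B\<in>Pow U. principal_minor M ({0..<N} - B))"
proof -
  let ?d = "\<lambda>i. if i \<in> U then 1 else 0 :: 'a"
  have "mat N N (\<lambda>(i, j). if i = j \<and> i \<in> U then 1 else 0) = mat N N (\<lambda>(i, j). if i = j then ?d i else 0)"
    by (intro cong_mat) auto
  then have "det (mat N N (\<lambda>(i, j). if i = j \<and> i \<in> U then 1 else 0) + M)
      = (\<Sum>B\<in>Pow {0..<N}. (\<Prod>i\<in>B. ?d i) * principal_minor M ({0..<N} - B))"
    by (simp add: det_add_diagonal[OF M])
  also have "\<dots> = (\<Sum>B\<in>Pow U. principal_minor M ({0..<N} - B))"
  proof (rule sum.mono_neutral_cong_right)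
    show "\<forall>B\<in>Pow {0..<N} - Pow U. (\<Prod>i\<in>B. ?d i) * principal_minor M ({0..<N} - B) = 0"
    proof
      fix B assume B: "B \<in> Pow {0..<N} - Pow U"
      obtain i where "i \<in> B" "i \<notin> U" using B by auto
      then have "(\<Prod>i\<in>B. ?d i) = 0"
        using B finite_subset[of B "{0..<N}"] by (intro prod_zero) auto
      then show "(\<Prod>i\<in>B. ?d i) * principal_minor M ({0..<N} - B) = 0" by simp
    qed
    show "(\<Prod>i\<in>B. ?d i) * principal_minor M ({0..<N} - B) = principal_minor M ({0..<N} - B)"
      if "B \<in> Pow U" for B
    proof -
      have "(\<Prod>i\<in>B. ?d i) = 1" using that by (intro prod.neutral) auto
      then show ?thesis by simp
    qed
  qed (use U in auto)
  finally show ?thesis .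
qed

lemma det_eq_principal_minor:
  fixes B M :: "'a :: comm_ring_1 mat"
  assumes B: "B \<in> carrier_mat k k" and g: "bij_betw g {0..<k} S"
    and entries: "\<And>i j. i < k \<Longrightarrow> j < k \<Longrightarrow> B $$ (i, j) = M $$ (g i, g j)"
  shows "det B = principal_minor M S"
proof -
  define g' where "g' = inv_into {0..<k} g"
  have inj: "inj_on g {0..<k}" using g by (simp add: bij_betw_def)
  have g': "bij_betw g' S {0..<k}" unfolding g'_def by (rule bij_betw_inv_into[OF g])
  have "det B = (\<Sum>q | q permutes {0..<k}. signof q * (\<Prod>i\<in>{0..<k}. M $$ (g i, g (q i))))"
    unfolding det_def'[OF B]
    by (intro sum.cong refl arg_cong[where f = "\<lambda>x. signof _ * x"] prod.cong)
      (auto simp: entries permutes_in_image)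
  also have "\<dots> = principal_minor M S"
    unfolding principal_minor_def
  proof (rule sum.reindex_bij_witness[where j = "map_permutation {0..<k} g" and i = "map_permutation S g'"])
    fix q assume "q \<in> {q. q permutes {0..<k}}"
    then have q: "q permutes {0..<k}" by simp
    show "map_permutation S g' (map_permutation {0..<k} g q) = q"
      by (rule map_permutation_compose_inv[OF g q]) (use inj in \<open>simp add: g'_def\<close>)
    show "map_permutation {0..<k} g q \<in> {p. p permutes S}"
      using map_permutation_permutes[OF g q] by simp
    have "(\<Prod>i\<in>S. M $$ (i, map_permutation {0..<k} g q i))
        = (\<Prod>x\<in>{0..<k}. M $$ (g x, map_permutation {0..<k} g q (g x)))"
      by (rule prod.reindex_bij_betw[symmetric, OF g])
    also have "\<dots> = (\<Prod>x\<in>{0..<k}. M $$ (g x, g (q x)))"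
      by (rule prod.cong[OF refl]) (simp add: map_permutation_apply[OF inj])
    finally show "signof (map_permutation {0..<k} g q) * (\<Prod>i\<in>S. M $$ (i, map_permutation {0..<k} g q i))
        = signof q * (\<Prod>i\<in>{0..<k}. M $$ (g i, g (q i)))"
      using sign_map_permutation[OF inj q] by simp
  next
    fix p assume "p \<in> {p. p permutes S}"
    then have p: "p permutes S" by simp
    show "map_permutation {0..<k} g (map_permutation S g' p) = p"
      by (rule map_permutation_compose_inv[OF g' p])
        (use g in \<open>simp add: g'_def bij_betw_def f_inv_into_f\<close>)
    show "map_permutation S g' p \<in> {q. q permutes {0..<k}}"
      using map_permutation_permutes[OF g' p] by simp
  qed
  finally show ?thesis .
qed

lemma rows_sub_carrier:
  assumes X: "X \<in> carrier_mat n r" and C: "C \<subseteq> {0..<n}"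
  shows "rows_sub X C \<in> carrier_mat (card C) r"
proof -
  have "{i. i < dim_row X \<and> i \<in> C} = C" using X C by auto
  moreover have "{j. j < dim_col X \<and> j \<in> {0..<dim_col X}} = {..<r}" using X by auto
  ultimately show ?thesis
    unfolding rows_sub_def carrier_mat_def by (simp add: dim_submatrix)
qed

lemma rows_sub_index:
  assumes X: "X \<in> carrier_mat n r" and C: "C \<subseteq> {0..<n}" and ij: "i < card C" "j < r"
  shows "rows_sub X C $$ (i, j) = X $$ (pick C i, j)"
proof -
  have rows: "{i. i < n \<and> i \<in> C} = C" using C by auto
  have "pick {0..<r} j = j"
    using pick_reduce_set[of j r UNIV] ij(2) by (simp add: pick_UNIV atLeast0LessThan lessThan_def)
  then show ?thesis
    unfolding rows_sub_def using X ij by (subst submatrix_index) (auto simp: rows)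
qed

lemma block_C_eq_four_block_mat:
  assumes "X \<in> carrier_mat n r" and "C \<subseteq> {0..<n}"
  shows "block_C X A C
    = four_block_mat (0\<^sub>m (card C) (card C)) (rows_sub X C) (- transpose_mat (rows_sub X C)) A"
  using rows_sub_carrier[OF assms] by (simp add: block_C_def Let_def)

lemma block_C_carrier:
  assumes "X \<in> carrier_mat n r" and "A \<in> carrier_mat r r" and "C \<subseteq> {0..<n}"
  shows "block_C X A C \<in> carrier_mat (card C + r) (card C + r)"
  using rows_sub_carrier[OF assms(1,3)] assms(2) by (simp add: block_C_eq_four_block_mat[OF assms(1,3)])

lemma skew_four_block_mat:
  fixes Y A :: "'a :: ab_group_add mat"
  assumes Y: "Y \<in> carrier_mat k r" and A: "A \<in> carrier_mat r r" and skew: "transpose_mat A = - A"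
  shows "transpose_mat (four_block_mat (0\<^sub>m k k) Y (- transpose_mat Y) A)
    = - four_block_mat (0\<^sub>m k k) Y (- transpose_mat Y) A"
proof -
  have "transpose_mat (four_block_mat (0\<^sub>m k k) Y (- transpose_mat Y) A)
      = four_block_mat (0\<^sub>m k k) (- Y) (transpose_mat Y) (- A)"
    using Y A by (subst transpose_four_block_mat[of _ k k _ r _ r]) (auto simp: skew transpose_uminus)
  also have "\<dots> = - four_block_mat (0\<^sub>m k k) Y (- transpose_mat Y) A"
    using Y A by (intro eq_matI) auto
  finally show ?thesis .
qed

lemma pick_less_of_subset:
  assumes "C \<subseteq> {0..<n}" and "i < card C"
  shows "pick C i < n"
  using pick_in_set[OF disjI1, OF assms(2)] assms(1) by auto

lemma bij_betw_pick_shift: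
  assumes C: "C \<subseteq> {0..<n}"
  shows "bij_betw (\<lambda>i. if i < card C then pick C i else n + (i - card C))
    {0..<card C + r} (C \<union> {n..<n + r})"
proof -
  let ?g = "\<lambda>i. if i < card C then pick C i else n + (i - card C)"
  let ?h = "\<lambda>x. if x < n then card {a\<in>C. a < x} else card C + (x - n)"
  have rank: "card {a\<in>C. a < x} < card C" if "x \<in> C" for x
    using that finite_subset[OF C] by (intro psubset_card_mono) auto
  show ?thesis
  proof (rule bij_betw_byWitness[where f' = ?h])
    show "\<forall>i\<in>{0..<card C + r}. ?h (?g i) = i"
      using pick_less_of_subset[OF C] card_pick[of _ C] by auto
    show "\<forall>x\<in>C \<union> {n..<n + r}. ?g (?h x) = x"
      using C rank pick_card_in_set[of _ C] by auto
    show "?g ` {0..<card C + r} \<subseteq> C \<union> {n..<n + r}"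
      using pick_in_set[of _ C] by auto
    show "?h ` (C \<union> {n..<n + r}) \<subseteq> {0..<card C + r}"
      using C rank by fastforce
  qed
qed

lemma det_skew_add_gram_nonzero:
  fixes X A :: "'a :: linordered_idom mat"
  assumes X: "X \<in> carrier_mat n r" and A: "A \<in> carrier_mat r r" and skew: "transpose_mat A = - A"
    and inj: "\<forall>v \<in> carrier_vec r. X *\<^sub>v v = 0\<^sub>v n \<longrightarrow> v = 0\<^sub>v r"
  shows "det (A + transpose_mat X * X) \<noteq> 0"
proof (rule det_skew_add_pos_def_nonzero[OF A skew])
  show "transpose_mat X * X \<in> carrier_mat r r" using X by simp
  fix v :: "'a vec" assume v: "v \<in> carrier_vec r" "v \<noteq> 0\<^sub>v r"
  have Xv: "X *\<^sub>v v \<in> carrier_vec n" and "X *\<^sub>v v \<noteq> 0\<^sub>v n" using X v inj by auto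
  then have "(X *\<^sub>v v) \<bullet> (X *\<^sub>v v) > 0" by (rule scalar_prod_self_pos)
  also have "(X *\<^sub>v v) \<bullet> (X *\<^sub>v v) = (transpose_mat X *\<^sub>v (X *\<^sub>v v)) \<bullet> v"
    by (rule transpose_vec_mult_scalar[OF X v(1) Xv, symmetric])
  also have "\<dots> = v \<bullet> (transpose_mat X * X *\<^sub>v v)"
    using X v by (simp add: assoc_mult_mat_vec comm_scalar_prod[of _ r])
  finally show "v \<bullet> (transpose_mat X * X *\<^sub>v v) > 0" .
qed

lemma block_C_skew:
  assumes "X \<in> carrier_mat n r" and "A \<in> carrier_mat r r" and "transpose_mat A = - A"
    and "C \<subseteq> {0..<n}"
  shows "transpose_mat (block_C X A C) = - block_C X A C"
  unfolding block_C_eq_four_block_mat[OF assms(1,4)]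
  by (rule skew_four_block_mat[OF rows_sub_carrier[OF assms(1,4)] assms(2,3)])

lemma det_block_C_eq_principal_minor:
  assumes X: "X \<in> carrier_mat n r" and A: "A \<in> carrier_mat r r" and C: "C \<subseteq> {0..<n}"
  shows "det (block_C X A C)
    = principal_minor (four_block_mat (0\<^sub>m n n) X (- transpose_mat X) A) (C \<union> {n..<n + r})"
proof (rule det_eq_principal_minor[OF block_C_carrier[OF X A C] bij_betw_pick_shift[OF C]])
  fix i j assume ij: "i < card C + r" "j < card C + r"
  show "block_C X A C $$ (i, j) = four_block_mat (0\<^sub>m n n) X (- transpose_mat X) A $$
      (if i < card C then pick C i else n + (i - card C), if j < card C then pick C j else n + (j - card C))"
    unfolding block_C_eq_four_block_mat[OF X C]
    using rows_sub_carrier[OF X C] X A ij pick_less_of_subset[OF C, of i] pick_less_of_subset[OF C, of j]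
    by (cases "i < card C"; cases "j < card C") (auto simp: rows_sub_index[OF X C])
qed

lemma det_add_gram_eq_sum_block_C:
  fixes X A :: "real mat"
  assumes X: "X \<in> carrier_mat n r" and A: "A \<in> carrier_mat r r"
  shows "det (A + transpose_mat X * X) = (\<Sum>C\<in>Pow {0..<n}. det (block_C X A C))"
proof -
  let ?M = "four_block_mat (0\<^sub>m n n) X (- transpose_mat X) A"
  have M: "?M \<in> carrier_mat (n + r) (n + r)" using X A by simp
  have "A + transpose_mat X * X = A - (- transpose_mat X) * X" using X A by (intro eq_matI) auto
  then have "det (A + transpose_mat X * X) = det (four_block_mat (1\<^sub>m n) X (- transpose_mat X) A)"
    using X A by (simp add: det_four_block_mat_one_upper_left)
  also have "four_block_mat (1\<^sub>m n) X (- transpose_mat X) A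
      = mat (n + r) (n + r) (\<lambda>(i, j). if i = j \<and> i \<in> {0..<n} then 1 else 0) + ?M"
    using X A by (intro eq_matI) auto
  also have "det \<dots> = (\<Sum>B\<in>Pow {0..<n}. principal_minor ?M ({0..<n + r} - B))"
    by (rule det_add_indicator_diagonal[OF M]) auto
  also have "\<dots> = (\<Sum>C\<in>Pow {0..<n}. principal_minor ?M (C \<union> {n..<n + r}))"
  proof (rule sum.reindex_bij_witness[where i = "\<lambda>C. {0..<n} - C" and j = "\<lambda>C. {0..<n} - C"])
    fix C assume "C \<in> Pow {0..<n}"
    then have "({0..<n} - C) \<union> {n..<n + r} = {0..<n + r} - C" by auto
    then show "principal_minor ?M (({0..<n} - C) \<union> {n..<n + r}) = principal_minor ?M ({0..<n + r} - C)"
      by simp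
  qed auto
  also have "\<dots> = (\<Sum>C\<in>Pow {0..<n}. det (block_C X A C))"
    using det_block_C_eq_principal_minor[OF X A] by simp
  finally show ?thesis .
qed

theorem mainTheorem6:
  fixes X A :: "real mat" and n r :: nat
  assumes "X \<in> carrier_mat n r" and "A \<in> carrier_mat r r"
    and "transpose_mat A = - A"
    and "\<forall>v \<in> carrier_vec r. X *\<^sub>v v = 0\<^sub>v n \<longrightarrow> v = 0\<^sub>v r"
  shows "det (A + transpose_mat X * X) > 0
    \<and> (\<forall>C. C \<subseteq> {0..<n} \<longrightarrow> pC X A C \<ge> 0)
    \<and> (\<Sum>C \<in> Pow {0..<n}. pC X A C) = 1"
proof -
  note X = assms(1) and A = assms(2) and skew = assms(3)
  let ?D = "det (A + transpose_mat X * X)"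
  have block_nonneg: "det (block_C X A C) \<ge> 0" if "C \<subseteq> {0..<n}" for C
    using det_skew_nonneg[OF block_C_carrier[OF X A that] block_C_skew[OF X A skew that]] .
  have sum: "?D = (\<Sum>C\<in>Pow {0..<n}. det (block_C X A C))"
    by (rule det_add_gram_eq_sum_block_C[OF X A])
  have "?D \<ge> 0" unfolding sum by (intro sum_nonneg) (use block_nonneg in auto)
  with det_skew_add_gram_nonzero[OF assms] have pos: "?D > 0" by simp
  have "(\<Sum>C\<in>Pow {0..<n}. pC X A C) = (\<Sum>C\<in>Pow {0..<n}. det (block_C X A C)) / ?D"
    unfolding pC_def by (simp add: sum_divide_distrib)
  then show ?thesis using pos block_nonneg sum by (simp add: pC_def)
qed

end
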